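(* Let $R$ be a $*$-ring. Then $R$ is strongly $J$-$*$-clean if and only if (1) $R/J(R)$, with the induced involution $(a+J(R))^*=a^*+J(R)$, is $*$-Boolean; (2) $R$ is abelian; and (3) every idempotent lifts modulo $J(R)$.
   Context: All rings are associative with identity. A $*$-ring is a ring $R$ with an involution $*$, i.e. a map $a\mapsto a^*$ with $(a+b)^*=a^*+b^*$, $(ab)^*=b^*a^*$, $(a^* )^*=a$. $J(R)$ denotes the Jacobson radical of $R$; it satisfies $J(R)^*\subseteq J(R)$, so the quotient inherits an involution. A projection is an element $e$ with $e^2=e=e^*$. $R$ is strongly $J$-$*$-clean if every $a\in R$ can be written $a=e+u$ with $e$ a projection, $u\in J(R)$ and $ae=ea$. A $*$-ring is $*$-Boolean if every element is a projection. A ring is abelian if all its idempotents are central. Idempotents lift modulo $J(R)$ means: for every $x\in R$ with $x-x^2\in J(R)$ there is an idempotent $f\in R$ with $x-f\in J(R)$. *)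

theory Defs
  imports Main
begin

definition involution :: "('a::ring_1 \<Rightarrow> 'a) \<Rightarrow> bool" where
  "involution st \<longleftrightarrow>
     (\<forall>a b. st (a + b) = st a + st b) \<and>
     (\<forall>a b. st (a * b) = st b * st a) \<and>
     (\<forall>a. st (st a) = a)"

definition left_ideal :: "'a::ring_1 set \<Rightarrow> bool" where
  "left_ideal I \<longleftrightarrow> 0 \<in> I \<and> (\<forall>x\<in>I. \<forall>y\<in>I. x - y \<in> I) \<and> (\<forall>r. \<forall>x\<in>I. r * x \<in> I)"

definition maximal_left_ideal :: "'a::ring_1 set \<Rightarrow> bool" where
  "maximal_left_ideal I \<longleftrightarrow> left_ideal I \<and> I \<noteq> UNIV \<and>
     (\<forall>K. left_ideal K \<and> I \<subseteq> K \<and> K \<noteq> UNIV \<longrightarrow> K = I)"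

definition jacobson :: "'a::ring_1 set" where
  "jacobson = \<Inter> {I. maximal_left_ideal I}"

definition projection :: "('a::ring_1 \<Rightarrow> 'a) \<Rightarrow> 'a \<Rightarrow> bool" where
  "projection st e \<longleftrightarrow> e * e = e \<and> st e = e"

definition strongly_J_star_clean :: "('a::ring_1 \<Rightarrow> 'a) \<Rightarrow> bool" where
  "strongly_J_star_clean st \<longleftrightarrow>
     (\<forall>a. \<exists>e u. a = e + u \<and> projection st e \<and> u \<in> jacobson \<and> a * e = e * a)"

text \<open>R/J(R) with induced involution is *-Boolean: every coset a + J(R) is a projection,
  i.e. (a+J)(a+J) = a+J and (a+J)^* = a^* + J = a + J.\<close>
definition quotient_J_star_boolean :: "('a::ring_1 \<Rightarrow> 'a) \<Rightarrow> bool" where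
  "quotient_J_star_boolean st \<longleftrightarrow>
     (\<forall>a::'a. a * a - a \<in> jacobson \<and> st a - a \<in> jacobson)"

definition abelian_ring :: "'a::ring_1 itself \<Rightarrow> bool" where
  "abelian_ring _ \<longleftrightarrow> (\<forall>e::'a. e * e = e \<longrightarrow> (\<forall>x. e * x = x * e))"

definition idempotents_lift_mod_J :: "'a::ring_1 itself \<Rightarrow> bool" where
  "idempotents_lift_mod_J _ \<longleftrightarrow>
     (\<forall>x::'a. x - x * x \<in> jacobson \<longrightarrow> (\<exists>f. f * f = f \<and> x - f \<in> jacobson))"

end

theory Submission
  imports Defs
begin

text \<open>A tripotent element \<open>d = d\<^sup>3\<close> of \<open>J(R)\<close> vanishes, because \<open>1 - d\<^sup>2\<close> is a unit.
  If \<open>R\<close> is strongly \<open>J\<close>-\<open>*\<close>-clean and \<open>g\<close> is idempotent with decomposition \<open>g = e + u\<close>,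
  then \<open>e\<close> commutes with \<open>g\<close>, so \<open>u = g - e\<close> is such a tripotent: every idempotent is a
  projection. In a \<open>*\<close>-ring where all idempotents are projections, \<open>f + f x (1 - f)\<close> is an
  idempotent, and comparing it with its adjoint shows \<open>f x (1 - f) = 0\<close>; hence idempotents are
  central. Conversely, lift \<open>a + J(R)\<close> to an idempotent \<open>f\<close>; being central, \<open>f\<close> commutes with
  \<open>f\<^sup>*\<close>, and \<open>f\<^sup>* - f \<in> J(R)\<close> is again a tripotent, so \<open>f\<close> is a projection.\<close>

lemma left_ideal_zero: "left_ideal I \<Longrightarrow> 0 \<in> I"
  unfolding left_ideal_def by blast

lemma left_ideal_diff: "left_ideal I \<Longrightarrow> x \<in> I \<Longrightarrow> y \<in> I \<Longrightarrow> x - y \<in> I"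
  unfolding left_ideal_def by blast

lemma left_ideal_mult: "left_ideal I \<Longrightarrow> x \<in> I \<Longrightarrow> r * x \<in> I"
  unfolding left_ideal_def by blast

lemma left_ideal_uminus: "left_ideal I \<Longrightarrow> x \<in> I \<Longrightarrow> - x \<in> I"
  unfolding left_ideal_def by (metis diff_0)

lemma left_ideal_add: "left_ideal I \<Longrightarrow> x \<in> I \<Longrightarrow> y \<in> I \<Longrightarrow> x + y \<in> I"
  by (metis diff_minus_eq_add left_ideal_diff left_ideal_uminus)

lemma left_ideal_one_imp_UNIV: "left_ideal I \<Longrightarrow> 1 \<in> I \<Longrightarrow> I = UNIV"
  using left_ideal_mult[of I 1] by auto

lemma left_ideal_add_principal:
  fixes y :: "'a::ring_1"
  assumes "left_ideal M"
  shows "left_ideal {m + r * y | m r. m \<in> M}"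
  unfolding left_ideal_def
proof (intro conjI ballI allI)
  show "0 \<in> {m + r * y | m r. m \<in> M}"
    using left_ideal_zero[OF assms] by (metis (mono_tags, lifting) add_0 mem_Collect_eq mult_zero_left)
next
  fix a b assume "a \<in> {m + r * y | m r. m \<in> M}" "b \<in> {m + r * y | m r. m \<in> M}"
  then obtain m1 r1 m2 r2 where "a = m1 + r1 * y" "b = m2 + r2 * y" "m1 \<in> M" "m2 \<in> M"
    by auto
  then have "a - b = (m1 - m2) + (r1 - r2) * y" "m1 - m2 \<in> M"
    using left_ideal_diff[OF assms] by (auto simp: algebra_simps)
  then show "a - b \<in> {m + r * y | m r. m \<in> M}" by blast
next
  fix s a assume "a \<in> {m + r * y | m r. m \<in> M}"
  then obtain m r where "a = m + r * y" "m \<in> M" by auto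
  then have "s * a = s * m + (s * r) * y" "s * m \<in> M"
    using left_ideal_mult[OF assms] by (auto simp: algebra_simps)
  then show "s * a \<in> {m + r * y | m r. m \<in> M}" by blast
qed

lemma left_ideal_principal: "left_ideal (range (\<lambda>r. r * (x::'a::ring_1)))"
  unfolding left_ideal_def
proof (intro conjI ballI allI)
  show "0 \<in> range (\<lambda>r. r * x)" by (rule range_eqI[of _ _ 0]) simp
next
  fix a b assume "a \<in> range (\<lambda>r. r * x)" "b \<in> range (\<lambda>r. r * x)"
  then show "a - b \<in> range (\<lambda>r. r * x)" by (auto simp: left_diff_distrib[symmetric])
next
  fix s a assume "a \<in> range (\<lambda>r. r * x)"
  then show "s * a \<in> range (\<lambda>r. r * x)" by (auto simp: mult.assoc[symmetric])
qed

lemma left_ideal_Union_chain: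
  assumes "C \<noteq> {}" "\<And>K. K \<in> C \<Longrightarrow> left_ideal K" "\<And>X Y. X \<in> C \<Longrightarrow> Y \<in> C \<Longrightarrow> X \<subseteq> Y \<or> Y \<subseteq> X"
  shows "left_ideal (\<Union>C)"
  unfolding left_ideal_def
proof (intro conjI ballI allI)
  show "0 \<in> \<Union>C" using assms(1,2) left_ideal_zero by blast
next
  fix x y assume "x \<in> \<Union>C" "y \<in> \<Union>C"
  then obtain X Y where "X \<in> C" "Y \<in> C" "x \<in> X" "y \<in> Y" by auto
  then show "x - y \<in> \<Union>C"
    using assms(2) assms(3)[of X Y] left_ideal_diff by blast
next
  fix r x assume "x \<in> \<Union>C"
  then show "r * x \<in> \<Union>C" using assms(2) left_ideal_mult by blast
qed

lemma exists_maximal_left_ideal: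
  fixes I :: "'a::ring_1 set"
  assumes "left_ideal I" and "1 \<notin> I"
  obtains M where "maximal_left_ideal M" "I \<subseteq> M"
proof -
  define A where "A = {K. left_ideal K \<and> I \<subseteq> K \<and> (1::'a) \<notin> K}"
  have "\<exists>M\<in>A. \<forall>X\<in>A. M \<subseteq> X \<longrightarrow> X = M"
  proof (rule subset_Zorn_nonempty)
    show "A \<noteq> {}" using assms A_def by auto
  next
    fix C assume "C \<noteq> {}" "subset.chain A C"
    then show "\<Union>C \<in> A"
      using left_ideal_Union_chain[of C] unfolding A_def subset.chain_def by blast
  qed
  then obtain M where M: "M \<in> A" "\<And>X. X \<in> A \<Longrightarrow> M \<subseteq> X \<Longrightarrow> X = M" by blast
  have "maximal_left_ideal M"
    unfolding maximal_left_ideal_def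
    using M left_ideal_one_imp_UNIV unfolding A_def by blast
  then show thesis using that M(1) A_def by blast
qed

lemma left_ideal_jacobson: "left_ideal (jacobson :: 'a::ring_1 set)"
  unfolding jacobson_def left_ideal_def maximal_left_ideal_def by auto

lemma jacobson_subset_maximal: "maximal_left_ideal M \<Longrightarrow> jacobson \<subseteq> M"
  unfolding jacobson_def by auto

lemma jacobson_one_minus_left_invertible:
  fixes u :: "'a::ring_1"
  assumes u: "u \<in> jacobson"
  shows "\<exists>v. v * (1 - u) = 1"
proof (rule ccontr)
  assume "\<not> ?thesis"
  then have "1 \<notin> range (\<lambda>r. r * (1 - u))" by (metis (no_types, lifting) imageE)
  then obtain M where M: "maximal_left_ideal M" "range (\<lambda>r. r * (1 - u)) \<subseteq> M"
    using exists_maximal_left_ideal left_ideal_principal by blast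
  have "left_ideal M" using M(1) unfolding maximal_left_ideal_def by blast
  moreover have "1 - u \<in> M" using M(2) by (metis mult_1 range_subsetD)
  moreover have "u \<in> M" using u jacobson_subset_maximal[OF M(1)] by blast
  ultimately have "1 \<in> M" using left_ideal_add[of M "1 - u" u] by simp
  then show False using M(1) left_ideal_one_imp_UNIV unfolding maximal_left_ideal_def by blast
qed

lemma jacobson_one_minus_invertible:
  fixes u :: "'a::ring_1"
  assumes u: "u \<in> jacobson"
  obtains v where "v * (1 - u) = 1" "(1 - u) * v = 1"
proof -
  obtain v where v: "v * (1 - u) = 1" using jacobson_one_minus_left_invertible u by blast
  have "- (v * u) \<in> jacobson"
    using u left_ideal_jacobson left_ideal_mult left_ideal_uminus by blast
  then obtain w where "w * (1 - - (v * u)) = 1" using jacobson_one_minus_left_invertible by blast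
  moreover have "1 - - (v * u) = v" using v by (simp add: algebra_simps)
  ultimately have wv: "w * v = 1" by simp
  have "w = w * (v * (1 - u))" using v by simp
  also have "\<dots> = 1 - u" by (simp add: mult.assoc[symmetric] wv)
  finally show thesis using that v wv by auto
qed

lemma jacobson_tripotent_eq_0:
  fixes d :: "'a::ring_1"
  assumes d: "d \<in> jacobson" and "d * d * d = d"
  shows "d = 0"
proof -
  have "d * d \<in> jacobson" using d left_ideal_jacobson left_ideal_mult by blast
  then obtain v where v: "(1 - d * d) * v = 1" using jacobson_one_minus_invertible by blast
  have "d * (1 - d * d) = 0" using assms(2) by (simp add: algebra_simps mult.assoc)
  then have "d * (1 - d * d) * v = 0" by simp
  then show ?thesis using v by (simp add: mult.assoc)
qed

lemma in_jacobsonI: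
  fixes y :: "'a::ring_1"
  assumes h: "\<And>r. \<exists>v. v * (1 - r * y) = 1"
  shows "y \<in> jacobson"
  unfolding jacobson_def
proof (rule InterI, rule ccontr)
  fix M assume "M \<in> {I. maximal_left_ideal I}" and yM: "y \<notin> M"
  then have M: "left_ideal M" "M \<noteq> UNIV"
    "\<And>K. left_ideal K \<Longrightarrow> M \<subseteq> K \<Longrightarrow> K \<noteq> UNIV \<Longrightarrow> K = M"
    unfolding maximal_left_ideal_def by auto
  define K where "K = {m + r * y | m r. m \<in> M}"
  have "M \<subseteq> K" unfolding K_def by (metis (mono_tags, lifting) add.right_neutral mem_Collect_eq mult_zero_left subsetI)
  moreover have "y \<in> K"
    unfolding K_def using left_ideal_zero[OF M(1)] by (metis (mono_tags, lifting) add_0 mem_Collect_eq mult_1)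
  ultimately have "K = UNIV" using M(3) left_ideal_add_principal[OF M(1)] yM unfolding K_def by blast
  then obtain m r where mr: "1 = m + r * y" "m \<in> M" unfolding K_def by blast
  obtain v where "v * (1 - r * y) = 1" using h by blast
  moreover have "1 - r * y = m" using mr(1) by (simp add: algebra_simps)
  ultimately have "1 \<in> M" using left_ideal_mult[OF M(1) mr(2), of v] by simp
  then show False using left_ideal_one_imp_UNIV M by blast
qed

context
  fixes st :: "'a::ring_1 \<Rightarrow> 'a"
  assumes inv: "involution st"
begin

lemma involution_add: "st (x + y) = st x + st y"
  and involution_mult: "st (x * y) = st y * st x"
  and involution_involutive: "st (st x) = x"
  using inv unfolding involution_def by auto

lemma involution_one: "st 1 = 1"
  using involution_mult[of "st 1" 1] by (simp add: involution_involutive)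

lemma involution_diff: "st (x - y) = st x - st y"
  using involution_add[of "x - y" y] by (simp add: algebra_simps)

lemma involution_idempotent: "e * e = e \<Longrightarrow> st e * st e = st e"
  by (metis involution_mult)

lemma jacobson_involution_closed:
  assumes u: "u \<in> jacobson"
  shows "st u \<in> jacobson"
proof (rule in_jacobsonI)
  fix r
  define s where "s = st r"
  have "s * u \<in> jacobson" using u left_ideal_jacobson left_ideal_mult by blast
  then obtain w where w: "(1 - s * u) * w = 1" using jacobson_one_minus_invertible by blast
  \<comment> \<open>\<open>1 - u s\<close> has the right inverse \<open>1 + u w s\<close>; taking adjoints gives a left inverse of \<open>1 - r u\<^sup>*\<close>.\<close>
  define t where "t = 1 + u * w * s"
  have "(1 - u * s) * t = 1 - u * s + u * ((1 - s * u) * w) * s"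
    unfolding t_def by (simp add: algebra_simps mult.assoc)
  also have "\<dots> = 1" using w by simp
  finally have "st ((1 - u * s) * t) = 1" using involution_one by simp
  then have "st t * (1 - r * st u) = 1"
    by (simp add: involution_mult involution_diff involution_one involution_involutive s_def)
  then show "\<exists>v. v * (1 - r * st u) = 1" by blast
qed

lemma corner_eq_0_if_idempotents_selfadjoint:
  fixes f x :: 'a
  assumes P: "\<And>g. g * g = g \<Longrightarrow> st g = g" and f: "f * f = f"
  shows "f * x * (1 - f) = 0"
proof -
  define y where "y = f * x * (1 - f)"
  have f1: "f * (1 - f) = 0" "(1 - f) * f = 0" using f by (simp_all add: algebra_simps)
  have fy: "f * y = y" unfolding y_def using f by (simp add: mult.assoc[symmetric])
  have "y * f = 0" unfolding y_def using f1 by (simp add: mult.assoc)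
  moreover have "y * y = f * x * ((1 - f) * f) * x * (1 - f)" unfolding y_def by (simp add: mult.assoc)
  then have "y * y = 0" using f1 by simp
  ultimately have "(f + y) * (f + y) = f + y" using f fy by (simp add: algebra_simps)
  then have "st y = y" using P[of "f + y"] P[OF f] by (simp add: involution_add)
  then have "y = (1 - f) * st x * f"
    unfolding y_def using P[OF f] by (simp add: involution_mult involution_diff involution_one mult.assoc)
  then have "f * y = 0" using f1 by (simp add: mult.assoc[symmetric])
  then show ?thesis using fy y_def by simp
qed

lemma idempotent_central_if_idempotents_selfadjoint:
  fixes f x :: 'a
  assumes "\<And>g. g * g = g \<Longrightarrow> st g = g" and f: "f * f = f"
  shows "f * x = x * f"
proof -
  have "(1 - f) * (1 - f) = 1 - f" using f by (simp add: algebra_simps)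
  then have "(1 - f) * x * f = 0"
    using corner_eq_0_if_idempotents_selfadjoint[OF assms(1), of "1 - f" x] by simp
  moreover have "f * x * (1 - f) = 0"
    using corner_eq_0_if_idempotents_selfadjoint[OF assms] .
  ultimately show ?thesis by (simp add: algebra_simps)
qed

end

lemma commuting_idempotents_diff_tripotent:
  fixes e f :: "'a::ring_1"
  assumes ee: "e * e = e" and ff: "f * f = f" and c: "e * f = f * e"
  shows "(f - e) * (f - e) * (f - e) = f - e"
proof -
  have "(f - e) * (f - e) = f - 2 * (e * f) + e"
    using ee ff c by (simp add: algebra_simps mult_2)
  moreover have "e * (e * f) = e * f" "e * (f * f) = e * f" "e * (f * e) = e * f" "f * (e * f) = e * f"
    using ee ff c by (metis mult.assoc)+
  ultimately show ?thesis
    using ee ff c by (simp add: algebra_simps mult_2)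
qed

lemma strongly_J_star_cleanE:
  assumes "strongly_J_star_clean st"
  obtains e u where "a = e + u" "e * e = e" "st e = e" "u \<in> jacobson" "e * u = u * e"
proof -
  obtain e u where "a = e + u" "projection st e" "u \<in> jacobson" "a * e = e * a"
    using assms unfolding strongly_J_star_clean_def by blast
  then show thesis using that unfolding projection_def by (simp add: algebra_simps)
qed

lemma strongly_J_star_clean_idempotent_selfadjoint:
  assumes "strongly_J_star_clean st" "g * g = g"
  shows "st g = g"
proof -
  obtain e u where h: "g = e + u" "e * e = e" "st e = e" "u \<in> jacobson" "e * u = u * e"
    using strongly_J_star_cleanE[OF assms(1)] by blast
  have "e * g = g * e" using h by (simp add: algebra_simps)
  then have "u * u * u = u"
    using commuting_idempotents_diff_tripotent[OF h(2) assms(2)] h(1) by simp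
  then have "u = 0" using h(4) jacobson_tripotent_eq_0 by blast
  then show ?thesis using h by simp
qed

lemma strongly_J_star_clean_imp_quotient_J_star_boolean:
  assumes inv: "involution st" and sc: "strongly_J_star_clean st"
  shows "quotient_J_star_boolean st"
  unfolding quotient_J_star_boolean_def
proof
  fix a
  obtain e u where h: "a = e + u" "e * e = e" "st e = e" "u \<in> jacobson" "e * u = u * e"
    using strongly_J_star_cleanE[OF sc] by blast
  have "a * a - a = (e + e + u - 1) * u" using h by (simp add: algebra_simps)
  moreover have "st a - a = st u - u" using h by (simp add: involution_add[OF inv])
  ultimately show "a * a - a \<in> jacobson \<and> st a - a \<in> jacobson"
    using h(4) jacobson_involution_closed[OF inv h(4)] left_ideal_jacobson
      left_ideal_mult left_ideal_diff by metis
qed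

lemma strongly_J_star_clean_imp_idempotents_lift:
  assumes "strongly_J_star_clean (st :: 'a::ring_1 \<Rightarrow> 'a)"
  shows "idempotents_lift_mod_J TYPE('a)"
  unfolding idempotents_lift_mod_J_def
proof (intro allI impI)
  fix x :: 'a
  obtain e u where "x = e + u" "e * e = e" "u \<in> jacobson"
    using strongly_J_star_cleanE[OF assms] by blast
  then show "\<exists>f. f * f = f \<and> x - f \<in> jacobson" by auto
qed

lemma strongly_J_star_cleanI:
  assumes inv: "involution st" and q: "quotient_J_star_boolean st"
    and ab: "abelian_ring TYPE('a)" and lift: "idempotents_lift_mod_J TYPE('a)"
  shows "strongly_J_star_clean (st :: 'a::ring_1 \<Rightarrow> 'a)"
  unfolding strongly_J_star_clean_def
proof
  fix a :: 'a
  have "a - a * a \<in> jacobson"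
    using q left_ideal_uminus[OF left_ideal_jacobson, of "a * a - a"]
    unfolding quotient_J_star_boolean_def by simp
  then obtain f where f: "f * f = f" "a - f \<in> jacobson"
    using lift unfolding idempotents_lift_mod_J_def by blast
  have central: "\<And>x. f * x = x * f" using ab f(1) unfolding abelian_ring_def by blast
  have "st f - f \<in> jacobson" using q unfolding quotient_J_star_boolean_def by blast
  moreover have "(st f - f) * (st f - f) * (st f - f) = st f - f"
    using commuting_idempotents_diff_tripotent[OF f(1) involution_idempotent[OF inv f(1)] central] .
  ultimately have "st f - f = 0" by (rule jacobson_tripotent_eq_0)
  then have "a = f + (a - f) \<and> projection st f \<and> a - f \<in> jacobson \<and> a * f = f * a"
    using f central[of a] unfolding projection_def by simp
  then show "\<exists>e u. a = e + u \<and> projection st e \<and> u \<in> jacobson \<and> a * e = e * a" by blast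
qed

theorem corollary3p8:
  fixes st :: "'a::ring_1 \<Rightarrow> 'a"
  assumes "involution st"
  shows "strongly_J_star_clean st \<longleftrightarrow>
           quotient_J_star_boolean st \<and> abelian_ring TYPE('a) \<and> idempotents_lift_mod_J TYPE('a)"
proof
  assume sc: "strongly_J_star_clean st"
  have "abelian_ring TYPE('a)"
    unfolding abelian_ring_def
    using idempotent_central_if_idempotents_selfadjoint[OF assms]
      strongly_J_star_clean_idempotent_selfadjoint[OF sc] by blast
  then show "quotient_J_star_boolean st \<and> abelian_ring TYPE('a) \<and> idempotents_lift_mod_J TYPE('a)"
    using strongly_J_star_clean_imp_quotient_J_star_boolean[OF assms sc]
      strongly_J_star_clean_imp_idempotents_lift[OF sc] by blast
next
  assume "quotient_J_star_boolean st \<and> abelian_ring TYPE('a) \<and> idempotents_lift_mod_J TYPE('a)"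
  then show "strongly_J_star_clean st" using strongly_J_star_cleanI[OF assms] by blast
qed

end
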